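(* Let $n=2$ and $a_{12}a_{21}\neq0$. If $\operatorname{ad}X_1$ does not act nilpotently on $X_2$ (i.e. $(\operatorname{ad}X_1)^mX_2\neq0$ for all $m\ge0$), then $\mathfrak g(A)$ has infinite growth.
   Context: Let $I=\{1,2\}$, let $A=(a_{ij})$ be a complex $2\times2$ matrix and $p:I\to\mathbb Z_2$ a parity function. Fix a complex vector space $\mathfrak h$ of dimension $2+\operatorname{corank}(A)$, linearly independent $\alpha_1,\alpha_2\in\mathfrak h^*$ and $h_1,h_2\in\mathfrak h$ with $\alpha_j(h_i)=a_{ij}$. Let $\bar{\mathfrak g}(A)$ be the Lie superalgebra generated by $\mathfrak h$ (even, abelian) and elements $X_i,Y_i$ of parity $p(i)$ subject to $[h,X_i]=\alpha_i(h)X_i$, $[h,Y_i]=-\alpha_i(h)Y_i$, $[X_i,Y_j]=\delta_{ij}h_i$. The contragredient Lie superalgebra $\mathfrak g(A)$ is the quotient of $\bar{\mathfrak g}(A)$ by the unique maximal ideal meeting $\mathfrak h$ trivially; we keep writing $X_i,Y_i,h_i$ for the images. The principal $\mathbb Z$-grading is given by $\deg\mathfrak h=0$, $\deg X_i=1$, $\deg Y_i=-1$; $\mathfrak g(A)$ has infinite growth if $\dim\mathfrak g_m$ is not bounded by any polynomial in $|m|$. *)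

theory Defs
  imports Complex_Main
begin

text \<open>A complex Lie superalgebra on the whole type 'a: scalar multiplication sc,
  super bracket br, even part E and odd part Od (complementary subspaces).\<close>

definition super_sign :: "bool \<Rightarrow> bool \<Rightarrow> complex" where
  "super_sign a b = (if a \<and> b then -1 else 1)"

definition homog :: "'a set \<Rightarrow> 'a set \<Rightarrow> bool \<Rightarrow> 'a \<Rightarrow> bool" where
  "homog E Od b x \<longleftrightarrow> (if b then x \<in> Od else x \<in> E)"

definition is_lie_superalgebra ::
  "(complex \<Rightarrow> 'a::ab_group_add \<Rightarrow> 'a) \<Rightarrow> ('a \<Rightarrow> 'a \<Rightarrow> 'a) \<Rightarrow> 'a set \<Rightarrow> 'a set \<Rightarrow> bool" where
  "is_lie_superalgebra sc br E Od \<longleftrightarrow>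
     vector_space sc \<and> module.subspace sc E \<and> module.subspace sc Od \<and>
     E \<inter> Od = {0} \<and> (\<forall>v. \<exists>e\<in>E. \<exists>od\<in>Od. v = e + od) \<and>
     (\<forall>x y z. br (x + y) z = br x z + br y z) \<and>
     (\<forall>x y z. br x (y + z) = br x y + br x z) \<and>
     (\<forall>c x y. br (sc c x) y = sc c (br x y)) \<and>
     (\<forall>c x y. br x (sc c y) = sc c (br x y)) \<and>
     (\<forall>a b x y. homog E Od a x \<longrightarrow> homog E Od b y \<longrightarrow> homog E Od (a \<noteq> b) (br x y)) \<and>
     (\<forall>a b x y. homog E Od a x \<longrightarrow> homog E Od b y \<longrightarrow>
        br x y = - sc (super_sign a b) (br y x)) \<and>
     (\<forall>a b c x y z. homog E Od a x \<longrightarrow> homog E Od b y \<longrightarrow> homog E Od c z \<longrightarrow>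
        br x (br y z) = br (br x y) z + sc (super_sign a b) (br y (br x z)))"

inductive_set generated_subalg ::
  "(complex \<Rightarrow> 'a::ab_group_add \<Rightarrow> 'a) \<Rightarrow> ('a \<Rightarrow> 'a \<Rightarrow> 'a) \<Rightarrow> 'a set \<Rightarrow> 'a set"
  for sc br S where
  gen_base: "x \<in> S \<Longrightarrow> x \<in> generated_subalg sc br S"
| gen_zero: "0 \<in> generated_subalg sc br S"
| gen_add: "x \<in> generated_subalg sc br S \<Longrightarrow> y \<in> generated_subalg sc br S \<Longrightarrow>
            x + y \<in> generated_subalg sc br S"
| gen_scale: "x \<in> generated_subalg sc br S \<Longrightarrow> sc c x \<in> generated_subalg sc br S"
| gen_br: "x \<in> generated_subalg sc br S \<Longrightarrow> y \<in> generated_subalg sc br S \<Longrightarrow>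
            br x y \<in> generated_subalg sc br S"

definition is_ideal :: "(complex \<Rightarrow> 'a::ab_group_add \<Rightarrow> 'a) \<Rightarrow> ('a \<Rightarrow> 'a \<Rightarrow> 'a) \<Rightarrow> 'a set \<Rightarrow> bool" where
  "is_ideal sc br I \<longleftrightarrow> module.subspace sc I \<and> (\<forall>x y. y \<in> I \<longrightarrow> br x y \<in> I)"

definition rank2 :: "(nat \<Rightarrow> nat \<Rightarrow> complex) \<Rightarrow> nat" where
  "rank2 A = (if A 1 1 * A 2 2 - A 1 2 * A 2 1 \<noteq> 0 then 2
              else if A 1 1 = 0 \<and> A 1 2 = 0 \<and> A 2 1 = 0 \<and> A 2 2 = 0 then 0 else 1)"

definition corank2 :: "(nat \<Rightarrow> nat \<Rightarrow> complex) \<Rightarrow> nat" where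
  "corank2 A = 2 - rank2 A"

text \<open>The contragredient Lie superalgebra g(A), characterised (up to isomorphism) as a
  Lie superalgebra (sc, br, E, Od) containing the even abelian Cartan subspace H of dimension
  2 + corank A and elements X i, Y i of parity p i, satisfying the defining relations,
  generated by H and the X i, Y i, and having no nonzero ideal meeting H trivially.\<close>

definition is_contragredient2 ::
  "(complex \<Rightarrow> 'a::ab_group_add \<Rightarrow> 'a) \<Rightarrow> ('a \<Rightarrow> 'a \<Rightarrow> 'a) \<Rightarrow> 'a set \<Rightarrow> 'a set \<Rightarrow>
   (nat \<Rightarrow> nat \<Rightarrow> complex) \<Rightarrow> (nat \<Rightarrow> bool) \<Rightarrow> 'a set \<Rightarrow> (nat \<Rightarrow> 'a \<Rightarrow> complex) \<Rightarrow>
   (nat \<Rightarrow> 'a) \<Rightarrow> (nat \<Rightarrow> 'a) \<Rightarrow> (nat \<Rightarrow> 'a) \<Rightarrow> bool" where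
  "is_contragredient2 sc br E Od A p H \<alpha> hh X Y \<longleftrightarrow>
     is_lie_superalgebra sc br E Od \<and>
     module.subspace sc H \<and> H \<subseteq> E \<and> vector_space.dim sc H = 2 + corank2 A \<and>
     (\<forall>x\<in>H. \<forall>y\<in>H. br x y = 0) \<and>
     (\<forall>i\<in>{1,2}. (\<forall>x\<in>H. \<forall>y\<in>H. \<alpha> i (x + y) = \<alpha> i x + \<alpha> i y) \<and>
                (\<forall>c. \<forall>x\<in>H. \<alpha> i (sc c x) = c * \<alpha> i x)) \<and>
     (\<forall>c1 c2. (\<forall>x\<in>H. c1 * \<alpha> 1 x + c2 * \<alpha> 2 x = 0) \<longrightarrow> c1 = 0 \<and> c2 = 0) \<and>
     (\<forall>i\<in>{1,2}. hh i \<in> H \<and> (\<forall>j\<in>{1,2}. \<alpha> j (hh i) = A i j)) \<and>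
     (\<forall>i\<in>{1,2}. homog E Od (p i) (X i) \<and> homog E Od (p i) (Y i)) \<and>
     (\<forall>i\<in>{1,2}. \<forall>x\<in>H. br x (X i) = sc (\<alpha> i x) (X i) \<and>
                         br x (Y i) = sc (- \<alpha> i x) (Y i)) \<and>
     (\<forall>i\<in>{1,2}. \<forall>j\<in>{1,2}. br (X i) (Y j) = (if i = j then hh i else 0)) \<and>
     generated_subalg sc br (H \<union> X ` {1,2} \<union> Y ` {1,2}) = UNIV \<and>
     (\<forall>I. is_ideal sc br I \<longrightarrow> I \<inter> H = {0} \<longrightarrow> I = {0})"

inductive deg_elem ::
  "('a \<Rightarrow> 'a \<Rightarrow> 'a) \<Rightarrow> 'a set \<Rightarrow> (nat \<Rightarrow> 'a) \<Rightarrow> (nat \<Rightarrow> 'a) \<Rightarrow> int \<Rightarrow> 'a \<Rightarrow> bool"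
  for br H X Y where
  deg_H: "v \<in> H \<Longrightarrow> deg_elem br H X Y 0 v"
| deg_X: "i \<in> {1,2} \<Longrightarrow> deg_elem br H X Y 1 (X i)"
| deg_Y: "i \<in> {1,2} \<Longrightarrow> deg_elem br H X Y (-1) (Y i)"
| deg_br: "deg_elem br H X Y a u \<Longrightarrow> deg_elem br H X Y b w \<Longrightarrow>
            deg_elem br H X Y (a + b) (br u w)"

definition graded_piece ::
  "(complex \<Rightarrow> 'a::ab_group_add \<Rightarrow> 'a) \<Rightarrow> ('a \<Rightarrow> 'a \<Rightarrow> 'a) \<Rightarrow> 'a set \<Rightarrow> (nat \<Rightarrow> 'a) \<Rightarrow> (nat \<Rightarrow> 'a) \<Rightarrow> int \<Rightarrow> 'a set" where
  "graded_piece sc br H X Y m = module.span sc {v. deg_elem br H X Y m v}"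

definition infinite_growth ::
  "(complex \<Rightarrow> 'a::ab_group_add \<Rightarrow> 'a) \<Rightarrow> ('a \<Rightarrow> 'a \<Rightarrow> 'a) \<Rightarrow> 'a set \<Rightarrow> (nat \<Rightarrow> 'a) \<Rightarrow> (nat \<Rightarrow> 'a) \<Rightarrow> bool" where
  "infinite_growth sc br H X Y \<longleftrightarrow>
     \<not> (\<exists>C::real. \<exists>d::nat. \<forall>m::int.
          (\<exists>B. finite B \<and> graded_piece sc br H X Y m \<subseteq> module.span sc B) \<and>
          real (vector_space.dim sc (graded_piece sc br H X Y m)) \<le> C * (1 + real_of_int \<bar>m\<bar>) ^ d)"

end

theory Submission imports Defs begin

(* Write u_k = (ad X_1)^k X_2 (all nonzero) and gap = 2 if X_1 is even, gap = 3 if it is odd.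
   (1) ad Y_2 kills u_k for k >= gap, and [Y_2, u_(gap-1)] is a nonzero multiple of
       zeta = X_1 (even case) resp. [X_1, X_1] (odd case).
   (2) [Y_1, u_k] is a multiple of u_(k-1), nonzero for k >= gap: otherwise u_k would be a
       positive weight vector killed by Y_1 and Y_2, and the ideal it generates would meet the
       Cartan subalgebra H trivially, which the definition of g(A) forbids.
   For a list a # r put u_chain (a # r) = [u_(r_l), [..., [u_(r_1), u_a]]].  On a "good" list
   (head a >= gap, tail entries above a and pairwise at least gap apart) the operator
   ad Y_2 (ad Y_1)^(a+1-gap) produces a nonzero multiple of [u_(r_l), ..., [u_(r_1), zeta]],
   which is u_chain of a shorter good list, and it kills good chains with larger head.
   By induction on the length, the u_chain of good lists are linearly independent.  Counting
   good lists of length k + 1 with a fixed degree gives N^k independent elements in a degree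
   O(N), which contradicts every bound C (1 + |m|)^(k-1) on the graded dimensions. *)

declare One_nat_def [simp del] \<comment> \<open>keep the numeral 1 for indices of X, Y and A\<close>

section \<open>Polynomial growth bounds\<close>

lemma no_polynomial_bound:
  fixes C :: real and d L :: nat and f :: "nat \<Rightarrow> nat"
  assumes lower: "\<And>N. 1 \<le> N \<Longrightarrow> \<exists>M. N ^ Suc d \<le> f M \<and> M + 1 \<le> L * N"
    and upper: "\<And>M. real (f M) \<le> C * (1 + real M) ^ d"
  shows False
proof -
  define N where "N = nat \<lceil>C * real L ^ d\<rceil> + 1"
  have N1: "1 \<le> N" and NC: "C * real L ^ d < real N" unfolding N_def by linarith+
  obtain M where M: "N ^ Suc d \<le> f M" "M + 1 \<le> L * N" using lower[OF N1] by blast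
  have "real (N ^ Suc d) \<le> real (f M)" using M(1) by (rule of_nat_mono)
  hence NM: "real N ^ Suc d \<le> C * (1 + real M) ^ d"
    using upper[of M] unfolding of_nat_power by (rule order_trans)
  have Npos: "0 < real N" using N1 by simp
  have C0: "0 \<le> C"
  proof (rule ccontr)
    assume "\<not> 0 \<le> C"
    hence "C * (1 + real M) ^ d < 0" by (simp add: mult_neg_pos)
    thus False using NM Npos by (smt (verit) zero_less_power)
  qed
  have "real (M + 1) \<le> real (L * N)" using M(2) by (rule of_nat_mono)
  hence "1 + real M \<le> real L * real N" by simp
  hence "(1 + real M) ^ d \<le> (real L * real N) ^ d" by (intro power_mono) simp_all
  hence "C * (1 + real M) ^ d \<le> C * real L ^ d * real N ^ d"
    using C0 by (simp add: mult_left_mono power_mult_distrib mult.assoc)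
  hence "real N * real N ^ d \<le> (C * real L ^ d) * real N ^ d" using NM by simp
  hence "real N \<le> C * real L ^ d" using Npos by simp
  thus False using NC by simp
qed

context vector_space
begin

lemma independent_card_le_dim_spanned:
  assumes "finite F" "V \<subseteq> span F" "A \<subseteq> V" "independent A"
  shows "card A \<le> dim V"
proof -
  obtain A' where A': "A' \<subseteq> V" "independent A'" "V \<subseteq> span A'" "card A' = dim V"
    by (rule basis_exists)
  have "finite A'" using independent_span_bound[OF assms(1) A'(2)] A'(1) assms(2) by auto
  thus ?thesis using independent_span_bound[OF _ assms(4), of A'] assms(3) A'(3,4) by auto
qed

end

section \<open>Lie superalgebras\<close>

locale lie_superalgebra =
  fixes sc :: "complex \<Rightarrow> 'a::ab_group_add \<Rightarrow> 'a"
    and br :: "'a \<Rightarrow> 'a \<Rightarrow> 'a"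
    and E Od :: "'a set"
  assumes lie: "is_lie_superalgebra sc br E Od"
begin

sublocale vs: vector_space sc
  using lie unfolding is_lie_superalgebra_def by blast

abbreviation hom :: "bool \<Rightarrow> 'a \<Rightarrow> bool" where "hom b x \<equiv> homog E Od b x"
abbreviation ss :: "bool \<Rightarrow> bool \<Rightarrow> complex" where "ss \<equiv> super_sign"

lemma br_addL: "br (x + y) z = br x z + br y z"
  using lie unfolding is_lie_superalgebra_def by (elim conjE) (erule allE)+

lemma br_addR: "br x (y + z) = br x y + br x z"
  using lie unfolding is_lie_superalgebra_def by (elim conjE) (erule allE)+

lemma br_scL: "br (sc c x) y = sc c (br x y)"
  using lie unfolding is_lie_superalgebra_def by (elim conjE) (erule allE)+

lemma br_scR: "br x (sc c y) = sc c (br x y)"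
  using lie unfolding is_lie_superalgebra_def by (elim conjE) (erule allE)+

lemma br_parity: "hom a x \<Longrightarrow> hom b y \<Longrightarrow> hom (a \<noteq> b) (br x y)"
  using lie unfolding is_lie_superalgebra_def by (elim conjE) blast

lemma super_antisym: "hom a x \<Longrightarrow> hom b y \<Longrightarrow> br x y = - sc (ss a b) (br y x)"
  using lie unfolding is_lie_superalgebra_def by (elim conjE) fast

lemma super_jacobi: "hom a x \<Longrightarrow> hom b y \<Longrightarrow> hom c z \<Longrightarrow>
    br x (br y z) = br (br x y) z + sc (ss a b) (br y (br x z))"
  using lie unfolding is_lie_superalgebra_def by (elim conjE) fast

lemma br_0L [simp]: "br 0 z = 0"
  using br_addL[of 0 0 z] by simp

lemma br_0R [simp]: "br z 0 = 0"
  using br_addR[of z 0 0] by simp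

lemma br_negR: "br x (- y) = - br x y"
proof -
  have "br x y + br x (- y) = 0" using br_addR[of x y "- y"] by simp
  thus ?thesis by (rule add.inverse_unique[symmetric])
qed

lemma br_negL: "br (- x) y = - br x y"
proof -
  have "br x y + br (- x) y = 0" using br_addL[of x "- x" y] by simp
  thus ?thesis by (rule add.inverse_unique[symmetric])
qed

lemma br_diffR: "br x (y - z) = br x y - br x z"
  using br_addR[of x y "- z"] by (simp add: br_negR)

lemma br_sumR: "br x (sum g S) = (\<Sum>i\<in>S. br x (g i))"
  by (induct S rule: infinite_finite_induct) (simp_all add: br_addR)

lemma br_span_right:
  assumes gen: "\<And>w. w \<in> P \<Longrightarrow> br z w \<in> vs.span Q" and w: "w \<in> vs.span P"
  shows "br z w \<in> vs.span Q"
  using w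
proof (induct rule: vs.span_induct_alt)
  case (step c x y)
  have "br z x \<in> vs.span Q" using gen step(1) .
  thus ?case using step(2) unfolding br_addR br_scR by (intro vs.span_add vs.span_scale)
qed (simp add: vs.span_zero)

lemma br_span_left:
  assumes gen: "\<And>z. z \<in> P \<Longrightarrow> br z w \<in> vs.span Q" and z: "z \<in> vs.span P"
  shows "br z w \<in> vs.span Q"
  using z
proof (induct rule: vs.span_induct_alt)
  case (step c x y)
  have "br x w \<in> vs.span Q" using gen step(1) .
  thus ?case using step(2) unfolding br_addL br_scL by (intro vs.span_add vs.span_scale)
qed (simp add: vs.span_zero)

lemma super_sign_cases: "ss a b = 1 \<or> ss a b = -1"
  and super_sign_nz: "ss a b \<noteq> 0"
  and super_sign_even: "ss False b = 1" "ss b False = 1"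
  by (auto simp: super_sign_def)

lemma double_scale: "sc 2 (x::'a) = x + x"
  using vs.scale_left_distrib[of 1 1 x] by simp

lemma double_zero: fixes x :: 'a assumes "x + x = 0" shows "x = 0"
proof -
  have "sc (1/2) (sc 2 x) = 0" using assms by (simp add: double_scale)
  thus ?thesis by simp
qed

lemma triple_zero: fixes x :: 'a assumes "x + x + x = 0" shows "x = 0"
proof -
  have "sc 3 x = x + x + x"
    using vs.scale_left_distrib[of 2 1 x] double_scale[of x] by simp
  hence "sc (1/3) (sc 3 x) = 0" using assms by simp
  thus ?thesis by simp
qed

lemma even_self_bracket:
  assumes "hom False x" shows "br x x = 0"
proof (rule double_zero)
  have "br x x = - br x x" using super_antisym[OF assms assms] by (simp add: super_sign_def)
  thus "br x x + br x x = 0" by (metis add.right_inverse)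
qed

lemma odd_self_bracket:
  assumes odd: "hom True x" shows "br x (br x x) = 0"
proof (rule triple_zero)
  let ?w = "br x (br x x)"
  have xx: "hom False (br x x)" using br_parity[OF odd odd] by simp
  have "?w = br (br x x) x + sc (ss True True) ?w" by (rule super_jacobi[OF odd odd odd])
  moreover have "br (br x x) x = - sc (ss False True) ?w" by (rule super_antisym[OF xx odd])
  ultimately have "?w = - ?w - ?w" by (simp add: super_sign_def)
  thus "?w + ?w + ?w = 0" by (simp add: algebra_simps)
qed

end


section \<open>Contragredient Lie superalgebras of size 2\<close>

locale contragredient2 =
  fixes sc :: "complex \<Rightarrow> 'a::ab_group_add \<Rightarrow> 'a"
    and br :: "'a \<Rightarrow> 'a \<Rightarrow> 'a"
    and E Od H :: "'a set"
    and A :: "nat \<Rightarrow> nat \<Rightarrow> complex"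
    and p :: "nat \<Rightarrow> bool"
    and \<alpha> :: "nat \<Rightarrow> 'a \<Rightarrow> complex"
    and hh X Y :: "nat \<Rightarrow> 'a"
  assumes contragredient: "is_contragredient2 sc br E Od A p H \<alpha> hh X Y"
begin

sublocale lie_superalgebra sc br E Od
  using contragredient unfolding is_contragredient2_def lie_superalgebra_def by blast

lemma contragredient_relations:
  "vs.subspace H \<and> H \<subseteq> E \<and> (\<forall>x\<in>H. \<forall>y\<in>H. br x y = 0) \<and>
   (\<forall>c1 c2. (\<forall>x\<in>H. c1 * \<alpha> 1 x + c2 * \<alpha> 2 x = 0) \<longrightarrow> c1 = 0 \<and> c2 = 0) \<and>
   (\<forall>i\<in>{1,2}. hh i \<in> H \<and> (\<forall>j\<in>{1,2}. \<alpha> j (hh i) = A i j)) \<and>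
   (\<forall>i\<in>{1,2}. hom (p i) (X i) \<and> hom (p i) (Y i)) \<and>
   (\<forall>i\<in>{1,2}. \<forall>x\<in>H. br x (X i) = sc (\<alpha> i x) (X i) \<and> br x (Y i) = sc (- \<alpha> i x) (Y i)) \<and>
   (\<forall>i\<in>{1,2}. \<forall>j\<in>{1,2}. br (X i) (Y j) = (if i = j then hh i else 0)) \<and>
   generated_subalg sc br (H \<union> X ` {1,2} \<union> Y ` {1,2}) = UNIV \<and>
   (\<forall>I. is_ideal sc br I \<longrightarrow> I \<inter> H = {0} \<longrightarrow> I = {0})"
  using contragredient unfolding is_contragredient2_def by (elim conjE) (intro conjI; assumption)

lemma cartan_subspace: "vs.subspace H"
  and cartan_even: "H \<subseteq> E"
  and cartan_abelian: "x \<in> H \<Longrightarrow> y \<in> H \<Longrightarrow> br x y = 0"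
  and roots_independent: "(\<forall>x\<in>H. c1 * \<alpha> 1 x + c2 * \<alpha> 2 x = 0) \<Longrightarrow> c1 = 0 \<and> c2 = 0"
  and coroot_cartan: "i \<in> {1,2} \<Longrightarrow> hh i \<in> H"
  and root_coroot: "i \<in> {1,2} \<Longrightarrow> j \<in> {1,2} \<Longrightarrow> \<alpha> j (hh i) = A i j"
  and parity_X: "i \<in> {1,2} \<Longrightarrow> hom (p i) (X i)"
  and parity_Y: "i \<in> {1,2} \<Longrightarrow> hom (p i) (Y i)"
  and weight_X: "i \<in> {1,2} \<Longrightarrow> x \<in> H \<Longrightarrow> br x (X i) = sc (\<alpha> i x) (X i)"
  and br_X_Y: "i \<in> {1,2} \<Longrightarrow> j \<in> {1,2} \<Longrightarrow> br (X i) (Y j) = (if i = j then hh i else 0)"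
  and generated: "generated_subalg sc br (H \<union> X ` {1,2} \<union> Y ` {1,2}) = UNIV"
  and no_ideal_avoiding_cartan: "is_ideal sc br I \<Longrightarrow> I \<inter> H = {0} \<Longrightarrow> I = {0}"
  using contragredient_relations by blast+

lemma cartan_parity: "x \<in> H \<Longrightarrow> hom False x"
  using cartan_even by (auto simp: homog_def)

lemma br_Y_X: "i \<in> {1,2} \<Longrightarrow> j \<in> {1,2} \<Longrightarrow>
    br (Y i) (X j) = (if i = j then - sc (ss (p i) (p j)) (hh i) else 0)"
  using super_antisym[OF parity_Y parity_X, of i j] br_X_Y[of j i] by auto

lemma br_Y_X_cartan: "i \<in> {1,2} \<Longrightarrow> j \<in> {1,2} \<Longrightarrow> br (Y i) (X j) \<in> H"
  using br_Y_X[of i j] coroot_cartan[of i]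
  by (cases "i = j") (simp_all add: vs.subspace_neg[OF cartan_subspace]
      vs.subspace_scale[OF cartan_subspace] vs.subspace_0[OF cartan_subspace])

inductive_set monomials :: "'a set" where
  mon_H: "x \<in> H \<Longrightarrow> x \<in> monomials"
| mon_X: "i \<in> {1,2} \<Longrightarrow> X i \<in> monomials"
| mon_Y: "i \<in> {1,2} \<Longrightarrow> Y i \<in> monomials"
| mon_br: "a \<in> monomials \<Longrightarrow> b \<in> monomials \<Longrightarrow> br a b \<in> monomials"

lemma monomial_homogeneous: "z \<in> monomials \<Longrightarrow> \<exists>b. hom b z"
proof (induct rule: monomials.induct)
  case (mon_br a c)
  thus ?case using br_parity by blast
qed (use cartan_parity parity_X parity_Y in blast)+

lemma span_monomials: "x \<in> vs.span monomials"
proof -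
  have "x \<in> vs.span monomials" if "x \<in> generated_subalg sc br (H \<union> X ` {1,2} \<union> Y ` {1,2})"
    using that
  proof (induct rule: generated_subalg.induct)
    case (gen_br x y)
    show ?case
    proof (rule br_span_left[OF _ gen_br(2)])
      fix z assume "z \<in> monomials"
      thus "br z y \<in> vs.span monomials"
        by (intro br_span_right[OF _ gen_br(4)] vs.span_base mon_br)
    qed
  qed (auto intro: vs.span_base vs.span_zero vs.span_add vs.span_scale monomials.intros)
  thus ?thesis using generated by blast
qed

text \<open>Weight vectors of weight c1 alpha_1 + c2 alpha_2 with natural coefficients and c2 \<ge> 1;
  these are the weights of the positive part involving X 2.\<close>

definition pos_weight_vector :: "'a \<Rightarrow> bool" where
  "pos_weight_vector w \<longleftrightarrow> (\<exists>c1 c2::nat. c2 \<ge> 1 \<and>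
     (\<forall>h\<in>H. br h w = sc (of_nat c1 * \<alpha> 1 h + of_nat c2 * \<alpha> 2 h) w))"

lemma pos_weight_scale:
  assumes "pos_weight_vector w" shows "pos_weight_vector (sc c w)"
proof -
  obtain c1 c2 :: nat where c: "c2 \<ge> 1"
    "\<forall>h\<in>H. br h w = sc (of_nat c1 * \<alpha> 1 h + of_nat c2 * \<alpha> 2 h) w"
    using assms unfolding pos_weight_vector_def by auto
  show ?thesis unfolding pos_weight_vector_def
    by (intro exI[of _ c1] exI[of _ c2] conjI c(1) ballI)
      (simp add: br_scR c(2) vs.scale_left_commute)
qed

lemma pos_weight_raise:
  assumes w: "pos_weight_vector w" and hw: "hom b w" and j: "j \<in> {1,2}"
  shows "pos_weight_vector (br (X j) w)"
proof -
  obtain c1 c2 :: nat where c: "c2 \<ge> 1" "\<forall>h\<in>H. br h w = sc (of_nat c1 * \<alpha> 1 h + of_nat c2 * \<alpha> 2 h) w"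
    using w unfolding pos_weight_vector_def by auto
  have raise: "br h (br (X j) w) = sc (\<alpha> j h + (of_nat c1 * \<alpha> 1 h + of_nat c2 * \<alpha> 2 h)) (br (X j) w)"
    if h: "h \<in> H" for h
  proof -
    have "br h (br (X j) w) = br (br h (X j)) w + sc (ss False (p j)) (br (X j) (br h w))"
      by (rule super_jacobi[OF cartan_parity[OF h] parity_X[OF j] hw])
    thus ?thesis
      unfolding weight_X[OF j h] super_sign_even c(2)[rule_format, OF h] br_scL br_scR
      by (simp add: vs.scale_left_distrib)
  qed
  show ?thesis
  proof (cases "j = 1")
    case True
    thus ?thesis unfolding pos_weight_vector_def using raise c(1)
      by (intro exI[of _ "Suc c1"] exI[of _ c2]) (simp add: algebra_simps)
  next
    case False
    hence "j = 2" using j by simp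
    thus ?thesis unfolding pos_weight_vector_def using raise c(1)
      by (intro exI[of _ c1] exI[of _ "Suc c2"]) (simp add: algebra_simps)
  qed
qed

text \<open>A finite sum of positive weight vectors that commutes with H vanishes: weight vectors
  of nonzero weight cannot add up to a weight-zero vector.\<close>

lemma pos_weight_sum_zero:
  "finite T \<Longrightarrow> (\<And>w. w \<in> T \<Longrightarrow> pos_weight_vector (g w)) \<Longrightarrow> (\<And>h. h \<in> H \<Longrightarrow> br h y = 0)
   \<Longrightarrow> y = sum g T \<Longrightarrow> y = 0"
proof (induct T arbitrary: g y rule: finite_induct)
  case (insert a T)
  obtain c1 c2 :: nat where c: "c2 \<ge> 1"
    "\<forall>h\<in>H. br h (g a) = sc (of_nat c1 * \<alpha> 1 h + of_nat c2 * \<alpha> 2 h) (g a)"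
    using insert(4)[of a] unfolding pos_weight_vector_def by auto
  obtain h0 where h0: "h0 \<in> H" "of_nat c1 * \<alpha> 1 h0 + of_nat c2 * \<alpha> 2 h0 \<noteq> 0"
    using roots_independent[of "of_nat c1" "of_nat c2"] c(1) by fastforce
  define \<beta> where "\<beta> = of_nat c1 * \<alpha> 1 h0 + of_nat c2 * \<alpha> 2 h0"
  \<comment> \<open>apply ad h0 - \<beta>, which kills g a and keeps the others of positive weight\<close>
  define g' where "g' w = br h0 (g w) - sc \<beta> (g w)" for w
  have ga: "br h0 (g a) = sc \<beta> (g a)" using c(2) h0(1) \<beta>_def by simp
  have "sum g' T = br h0 (y - g a) - sc \<beta> (y - g a)"
    using insert(1,2,6) unfolding g'_def by (simp add: sum_subtractf br_sumR vs.scale_sum_right)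
  also have "\<dots> = sc (- \<beta>) y"
    unfolding br_diffR vs.scale_right_diff_distrib insert(5)[OF h0(1)] ga by simp
  finally have e: "sc (- \<beta>) y = sum g' T" ..
  have "pos_weight_vector (g' w)" if "w \<in> T" for w
  proof -
    have gw: "pos_weight_vector (g w)" using insert(4) that by simp
    then obtain d1 d2 :: nat where
      "\<forall>h\<in>H. br h (g w) = sc (of_nat d1 * \<alpha> 1 h + of_nat d2 * \<alpha> 2 h) (g w)"
      unfolding pos_weight_vector_def by blast
    hence "g' w = sc (of_nat d1 * \<alpha> 1 h0 + of_nat d2 * \<alpha> 2 h0 - \<beta>) (g w)"
      unfolding g'_def using h0(1) by (simp add: vs.scale_left_diff_distrib)
    thus ?thesis using pos_weight_scale[OF gw] by simp
  qed
  hence "sc (- \<beta>) y = 0"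
    by (rule insert(3)[OF _ _ e]) (simp_all add: br_scR br_negR insert(5))
  thus ?case using h0(2) unfolding \<beta>_def by (simp add: add_eq_0_iff)
qed simp

inductive_set raised :: "'a \<Rightarrow> 'a set" for v where
  raised_base: "v \<in> raised v"
| raised_step: "w \<in> raised v \<Longrightarrow> j \<in> {1,2} \<Longrightarrow> br (X j) w \<in> raised v"

lemma raised_homogeneous:
  assumes "hom b v" and "w \<in> raised v" shows "\<exists>b. hom b w"
  using assms(2)
proof (induct rule: raised.induct)
  case (raised_step w j)
  then obtain bw where "hom bw w" by blast
  thus ?case using br_parity[OF parity_X[OF raised_step(3)]] by blast
qed (use assms(1) in blast)

lemma raised_pos_weight:
  assumes "hom b v" "pos_weight_vector v" "w \<in> raised v" shows "pos_weight_vector w"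
  using assms(3)
proof (induct rule: raised.induct)
  case (raised_step w j)
  obtain bw where "hom bw w" using raised_homogeneous[OF assms(1) raised_step(1)] by blast
  thus ?case by (rule pos_weight_raise[OF raised_step(2) _ raised_step(3)])
qed (rule assms(2))

text \<open>If a homogeneous positive weight vector v is killed by Y 1 and Y 2, the span of
  raised v is an ideal; it meets H trivially, so v = 0.\<close>

context
  fixes v b
  assumes v_hom: "hom b v" and v_weight: "pos_weight_vector v"
    and v_Y1: "br (Y 1) v = 0" and v_Y2: "br (Y 2) v = 0"
begin

lemma raised_cartan:
  assumes h: "h \<in> H" and w: "w \<in> raised v" shows "br h w \<in> vs.span (raised v)"
proof -
  obtain c1 c2 :: nat where "\<forall>h\<in>H. br h w = sc (of_nat c1 * \<alpha> 1 h + of_nat c2 * \<alpha> 2 h) w"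
    using raised_pos_weight[OF v_hom v_weight w] unfolding pos_weight_vector_def by blast
  thus ?thesis using h w by (simp add: vs.span_scale vs.span_base)
qed

lemma raised_Y:
  assumes i: "i \<in> {1,2}" and w: "w \<in> raised v" shows "br (Y i) w \<in> vs.span (raised v)"
  using w
proof (induct rule: raised.induct)
  case raised_base
  show ?case using i v_Y1 v_Y2 by (auto simp: vs.span_zero)
next
  case (raised_step w j)
  obtain bw where bw: "hom bw w" using raised_homogeneous[OF v_hom raised_step(1)] by blast
  have jacobi: "br (Y i) (br (X j) w) =
      br (br (Y i) (X j)) w + sc (ss (p i) (p j)) (br (X j) (br (Y i) w))"
    by (rule super_jacobi[OF parity_Y[OF i] parity_X[OF raised_step(3)] bw])
  have 1: "br (br (Y i) (X j)) w \<in> vs.span (raised v)"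
    by (rule raised_cartan[OF br_Y_X_cartan[OF i raised_step(3)] raised_step(1)])
  have 2: "br (X j) (br (Y i) w) \<in> vs.span (raised v)"
    by (rule br_span_right[OF _ raised_step(2)])
      (rule vs.span_base, rule raised.raised_step[OF _ raised_step(3)])
  show ?case unfolding jacobi by (intro vs.span_add vs.span_scale 1 2)
qed

lemma raised_monomial:
  assumes z: "z \<in> monomials" shows "w \<in> raised v \<Longrightarrow> br z w \<in> vs.span (raised v)"
  using z
proof (induct arbitrary: w rule: monomials.induct)
  case (mon_H x) thus ?case by (rule raised_cartan)
next
  case (mon_X i) thus ?case by (intro vs.span_base raised.raised_step)
next
  case (mon_Y i) thus ?case by (rule raised_Y)
next
  case (mon_br a c w)
  obtain ba where ba: "hom ba a" using monomial_homogeneous[OF mon_br(1)] by blast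
  obtain bc where bc: "hom bc c" using monomial_homogeneous[OF mon_br(3)] by blast
  obtain bw where bw: "hom bw w" using raised_homogeneous[OF v_hom mon_br(5)] by blast
  have jacobi: "br (br a c) w = br a (br c w) - sc (ss ba bc) (br c (br a w))"
    using super_jacobi[OF ba bc bw] by (simp add: algebra_simps)
  have 1: "br a (br c w) \<in> vs.span (raised v)"
    by (rule br_span_right[OF mon_br(2) mon_br(4)[OF mon_br(5)]])
  have 2: "br c (br a w) \<in> vs.span (raised v)"
    by (rule br_span_right[OF mon_br(4) mon_br(2)[OF mon_br(5)]])
  show ?case unfolding jacobi by (intro vs.span_diff vs.span_scale 1 2)
qed

lemma lowest_weight_vanishes: "v = 0"
proof -
  let ?I = "vs.span (raised v)"
  have closed: "br x y \<in> ?I" if y: "y \<in> ?I" for x y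
    by (rule br_span_left[OF _ span_monomials]) (rule br_span_right[OF raised_monomial y])
  have ideal: "is_ideal sc br ?I"
    unfolding is_ideal_def using closed vs.subspace_span by blast
  have "x = 0" if x: "x \<in> ?I" "x \<in> H" for x
  proof -
    obtain T r where T: "finite T" "T \<subseteq> raised v" "x = (\<Sum>a\<in>T. sc (r a) a)"
      using x(1) unfolding vs.span_explicit by blast
    show ?thesis
    proof (rule pos_weight_sum_zero[OF T(1) _ _ T(3)])
      fix w assume "w \<in> T"
      thus "pos_weight_vector (sc (r w) w)"
        using T(2) by (intro pos_weight_scale raised_pos_weight[OF v_hom v_weight]) auto
    next
      fix h assume "h \<in> H"
      thus "br h x = 0" using x(2) by (rule cartan_abelian)
    qed
  qed
  hence "?I \<inter> H = {0}" using vs.span_zero vs.subspace_0[OF cartan_subspace] by blast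
  hence "?I = {0}" by (rule no_ideal_avoiding_cartan[OF ideal])
  thus ?thesis using vs.span_base[OF raised_base, of v] by simp
qed

end

end


section \<open>The elements u_k = (ad X_1)^k X_2\<close>

text \<open>The hypotheses of the theorem; of a_12 a_21 \<noteq> 0 only a_21 \<noteq> 0 is needed.\<close>

locale nonnilpotent_contragredient2 = contragredient2 +
  assumes a21: "A 2 1 \<noteq> 0"
    and nonnilpotent: "\<forall>m::nat. ((\<lambda>v. br (X 1) v) ^^ m) (X 2) \<noteq> 0"
begin

definition u :: "nat \<Rightarrow> 'a" where "u k = ((\<lambda>v. br (X 1) v) ^^ k) (X 2)"

lemma u_0: "u 0 = X 2" and u_Suc: "u (Suc k) = br (X 1) (u k)"
  by (simp_all add: u_def)

lemma u_nonzero: "u k \<noteq> 0"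
  using nonnilpotent by (simp add: u_def)

lemma X1_nonzero: "X 1 \<noteq> 0"
  using u_nonzero[of 1] u_Suc[of 0] by (auto simp: One_nat_def)

lemma parity_X1: "hom (p 1) (X 1)" and parity_X2: "hom (p 2) (X 2)"
  and parity_Y1: "hom (p 1) (Y 1)" and parity_Y2: "hom (p 2) (Y 2)"
  by (simp_all add: parity_X parity_Y)

lemma coroot1_cartan: "hh 1 \<in> H" and coroot2_cartan: "hh 2 \<in> H"
  by (simp_all add: coroot_cartan)

lemma weight_X1: "x \<in> H \<Longrightarrow> br x (X 1) = sc (\<alpha> 1 x) (X 1)"
  by (simp add: weight_X)

primrec u_parity :: "nat \<Rightarrow> bool" where
  "u_parity 0 = p 2"
| "u_parity (Suc k) = (p 1 \<noteq> u_parity k)"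

lemma u_homogeneous: "hom (u_parity k) (u k)"
proof (induct k)
  case 0 show ?case unfolding u_0 u_parity.simps by (rule parity_X2)
next
  case (Suc k) show ?case unfolding u_Suc u_parity.simps by (rule br_parity[OF parity_X1 Suc])
qed

lemma u_weight: "h \<in> H \<Longrightarrow> br h (u k) = sc (of_nat k * \<alpha> 1 h + \<alpha> 2 h) (u k)"
proof (induct k)
  case 0 thus ?case by (simp add: u_0 weight_X)
next
  case (Suc k)
  have "br h (u (Suc k)) = br (br h (X 1)) (u k) + sc (ss False (p 1)) (br (X 1) (br h (u k)))"
    unfolding u_Suc by (rule super_jacobi[OF cartan_parity[OF Suc.prems] parity_X1 u_homogeneous])
  also have "\<dots> = sc (\<alpha> 1 h) (u (Suc k)) + sc (of_nat k * \<alpha> 1 h + \<alpha> 2 h) (u (Suc k))"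
    unfolding Suc(1)[OF Suc(2)] weight_X1[OF Suc(2)] super_sign_even br_scL br_scR u_Suc by simp
  also have "\<dots> = sc (of_nat (Suc k) * \<alpha> 1 h + \<alpha> 2 h) (u (Suc k))"
    unfolding vs.scale_left_distrib[symmetric] by (simp add: algebra_simps)
  finally show ?case .
qed

lemma u_pos_weight: "pos_weight_vector (u k)"
  unfolding pos_weight_vector_def using u_weight by (intro exI[of _ k] exI[of _ 1]) simp

lemma Y1_u_Suc: "br (Y 1) (u (Suc k)) = sc (- ss (p 1) (p 1) * (of_nat k * A 1 1 + A 1 2)) (u k)
     + sc (ss (p 1) (p 1)) (br (X 1) (br (Y 1) (u k)))"
proof -
  have "br (Y 1) (u (Suc k)) =
      br (br (Y 1) (X 1)) (u k) + sc (ss (p 1) (p 1)) (br (X 1) (br (Y 1) (u k)))"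
    unfolding u_Suc by (rule super_jacobi[OF parity_Y1 parity_X1 u_homogeneous])
  moreover have "br (br (Y 1) (X 1)) (u k) = sc (- ss (p 1) (p 1) * (of_nat k * A 1 1 + A 1 2)) (u k)"
    using br_Y_X[of 1 1] root_coroot[of 1 1] root_coroot[of 1 2]
    by (simp add: br_negL br_scL u_weight[OF coroot1_cartan])
  ultimately show ?thesis by simp
qed

lemma Y1_u_lowers: "\<exists>c. br (Y 1) (u k) = sc c (u (k - 1))"
proof (induct k)
  case 0 show ?case using br_Y_X[of 1 2] by (intro exI[of _ 0]) (simp add: u_0)
next
  case (Suc k)
  then obtain c where c: "br (Y 1) (u k) = sc c (u (k - 1))" by blast
  show ?case
  proof (cases k)
    case 0
    thus ?thesis unfolding Y1_u_Suc using br_Y_X[of 1 2]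
      by (intro exI[of _ "- ss (p 1) (p 1) * (of_nat k * A 1 1 + A 1 2)"]) (simp add: u_0)
  next
    case (Suc k')
    have "br (X 1) (br (Y 1) (u k)) = sc c (u k)" unfolding c br_scR using Suc by (simp add: u_Suc)
    thus ?thesis unfolding Y1_u_Suc
      by (intro exI[of _ "- ss (p 1) (p 1) * (of_nat k * A 1 1 + A 1 2) + ss (p 1) (p 1) * c"])
        (simp add: vs.scale_left_distrib algebra_simps)
  qed
qed

text \<open>Y 2 commutes with X 1, so it acts on u k only through X 2 = u 0.\<close>

lemma Y2_u_Suc: "br (Y 2) (u (Suc k)) = sc (ss (p 2) (p 1)) (br (X 1) (br (Y 2) (u k)))"
  using super_jacobi[OF parity_Y2 parity_X1 u_homogeneous, of k] br_Y_X[of 2 1]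
  by (simp add: u_Suc)

definition Y2_u1_coeff :: complex where "Y2_u1_coeff = ss (p 2) (p 1) * ss (p 2) (p 2) * A 2 1"

lemma Y2_u1_coeff_nonzero: "Y2_u1_coeff \<noteq> 0"
  using a21 super_sign_nz by (simp add: Y2_u1_coeff_def)

lemma Y2_u_1: "br (Y 2) (u 1) = sc Y2_u1_coeff (X 1)"
proof -
  have X1_coroot2: "br (X 1) (hh 2) = - sc (A 2 1) (X 1)"
    using super_antisym[OF parity_X1 cartan_parity[OF coroot2_cartan]]
      weight_X1[OF coroot2_cartan] root_coroot[of 2 1]
    by (simp add: super_sign_even)
  have "br (Y 2) (u (Suc 0)) = sc Y2_u1_coeff (X 1)"
    using Y2_u_Suc[of 0] br_Y_X[of 2 2]
    by (simp add: u_0 br_negR br_scR X1_coroot2 Y2_u1_coeff_def mult.assoc)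
  thus ?thesis by (simp add: One_nat_def)
qed

lemma Y2_u_2: "br (Y 2) (u 2) = sc (ss (p 2) (p 1) * Y2_u1_coeff) (br (X 1) (X 1))"
  using Y2_u_Suc[of 1] unfolding Y2_u_1 br_scR Suc_1 by simp

text \<open>The gap t and the element zeta: the largest power of ad X 1 acting nontrivially on X 1
  is 0 for even X 1 and 1 for odd X 1.\<close>

definition gap :: nat where "gap = (if p 1 then 3 else 2)"

definition zeta :: 'a where "zeta = (if p 1 then br (X 1) (X 1) else X 1)"

lemma gap_ge_2: "gap \<ge> 2" by (simp add: gap_def)

lemma parity_X1_cases: "p 1 \<Longrightarrow> hom True (X 1)" "\<not> p 1 \<Longrightarrow> hom False (X 1)"
  using parity_X1 by simp_all

lemma Y2_kills_u: "k \<ge> gap \<Longrightarrow> br (Y 2) (u k) = 0"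
proof (induct k)
  case 0 thus ?case by (simp add: gap_def split: if_splits)
next
  case (Suc k)
  show ?case
  proof (cases "k \<ge> gap")
    case True
    thus ?thesis using Suc by (simp add: Y2_u_Suc)
  next
    case False
    hence k: "Suc k = gap" using Suc by simp
    show ?thesis
    proof (cases "p 1")
      case True
      hence "k = 2" using k by (simp add: gap_def)
      moreover have "br (Y 2) (u (Suc 2)) = 0"
        unfolding Y2_u_Suc Y2_u_2 br_scR odd_self_bracket[OF parity_X1_cases(1)[OF True]] by simp
      ultimately show ?thesis by simp
    next
      case False
      hence "k = 1" using k by (simp add: gap_def)
      thus ?thesis using even_self_bracket[OF parity_X1_cases(2)[OF False]]
        by (simp add: Y2_u_2 Suc_1)
    qed
  qed
qed

lemma Y2_u_gap: "\<exists>\<kappa>. \<kappa> \<noteq> 0 \<and> br (Y 2) (u (gap - 1)) = sc \<kappa> zeta"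
proof (cases "p 1")
  case True
  hence "gap - 1 = 2" by (simp add: gap_def)
  thus ?thesis using True Y2_u_2 Y2_u1_coeff_nonzero super_sign_nz
    by (intro exI[of _ "ss (p 2) (p 1) * Y2_u1_coeff"]) (simp add: zeta_def)
next
  case False
  hence "gap - 1 = 1" by (simp add: gap_def)
  thus ?thesis using False Y2_u_1 Y2_u1_coeff_nonzero by (intro exI[of _ Y2_u1_coeff]) (simp add: zeta_def)
qed

lemma odd_square_u: "p 1 \<Longrightarrow> br (br (X 1) (X 1)) (u i) = u (i + 2) + u (i + 2)"
  using super_jacobi[OF parity_X1 parity_X1 u_homogeneous, of i]
  by (simp add: u_Suc numeral_2_eq_2 super_sign_def algebra_simps)

lemma zeta_nonzero: "zeta \<noteq> 0"
proof (cases "p 1")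
  case True
  show ?thesis
  proof
    assume "zeta = 0"
    hence "br (br (X 1) (X 1)) (u 0) = 0" using True by (simp add: zeta_def)
    hence "u 2 + u 2 = 0" using odd_square_u[OF True, of 0] by (simp add: numeral_2_eq_2)
    thus False using double_zero u_nonzero by blast
  qed
next
  case False thus ?thesis using X1_nonzero by (simp add: zeta_def)
qed

lemma br_u_zeta: "\<exists>\<kappa>. \<kappa> \<noteq> 0 \<and> br (u i) zeta = sc \<kappa> (u (i + gap - 1))"
proof (cases "p 1")
  case True
  have "br (u i) zeta = - sc (ss (u_parity i) False) (br (br (X 1) (X 1)) (u i))"
    unfolding zeta_def using True super_antisym[OF u_homogeneous br_parity[OF parity_X1 parity_X1]]
    by simp
  also have "\<dots> = sc (-2) (u (i + 2))"
    using odd_square_u[OF True, of i] by (simp add: super_sign_even double_scale)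
  finally show ?thesis using True by (intro exI[of _ "-2"]) (simp add: gap_def)
next
  case False
  have "br (u i) zeta = - sc (ss (u_parity i) (p 1)) (br (X 1) (u i))"
    unfolding zeta_def using False super_antisym[OF u_homogeneous parity_X1] by simp
  also have "\<dots> = sc (- ss (u_parity i) (p 1)) (u (i + 1))"
    by (simp add: u_Suc[of i, unfolded Suc_eq_plus1])
  finally show ?thesis using False super_sign_nz
    by (intro exI[of _ "- ss (u_parity i) (p 1)"]) (simp add: gap_def Suc_eq_plus1)
qed

text \<open>Y 1 does not kill u k for k \<ge> gap: otherwise u k would be a lowest weight vector.\<close>

lemma Y1_u_nonzero: "k \<ge> gap \<Longrightarrow> br (Y 1) (u k) \<noteq> 0"
  using lowest_weight_vanishes[OF u_homogeneous u_pos_weight _ Y2_kills_u] u_nonzero by blast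

end


section \<open>Iterated brackets of the u_k and the action of Y_1 and Y_2 on them\<close>

context nonnilpotent_contragredient2
begin

primrec chain :: "'a \<Rightarrow> nat list \<Rightarrow> 'a" where
  "chain z [] = z"
| "chain z (i # r) = chain (br (u i) z) r"

fun u_chain :: "nat list \<Rightarrow> 'a" where
  "u_chain [] = 0"
| "u_chain (a # r) = chain (u a) r"

lemma chain_add: "chain (z1 + z2) r = chain z1 r + chain z2 r"
  by (induct r arbitrary: z1 z2) (simp_all add: br_addR)

lemma chain_scale: "chain (sc c z) r = sc c (chain z r)"
  by (induct r arbitrary: z) (simp_all add: br_scR)

lemma chain_zero: "chain 0 r = 0"
  using chain_scale[of 0 0 r] by simp

lemma sign_mult: "(s::complex) = 1 \<or> s = -1 \<Longrightarrow> s' = 1 \<or> s' = -1 \<Longrightarrow> s * s' = 1 \<or> s * s' = -1"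
  by auto

definition lowered :: "nat list \<Rightarrow> nat list set" where
  "lowered r = {r[q := r ! q - 1] | q. q < length r}"

lemma lowered_Cons: "r' \<in> lowered r \<Longrightarrow> i # r' \<in> lowered (i # r)"
proof -
  assume "r' \<in> lowered r"
  then obtain q where q: "q < length r" "r' = r[q := r ! q - 1]" unfolding lowered_def by blast
  hence "i # r' = (i # r)[Suc q := (i # r) ! Suc q - 1]" "Suc q < length (i # r)" by simp_all
  thus ?thesis unfolding lowered_def by blast
qed

lemma lowered_head: "(i - 1) # r \<in> lowered (i # r)"
  unfolding lowered_def by (auto intro!: exI[of _ 0])

text \<open>By the Leibniz rule, Y 1 acts on a chain by acting on its base, up to a sign, modulo
  the span of chains with one entry lowered.\<close>

lemma Y1_chain: "hom b z \<Longrightarrow> \<exists>s. (s = 1 \<or> s = -1) \<and>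
   br (Y 1) (chain z r) - sc s (chain (br (Y 1) z) r) \<in> vs.span {chain z r' | r'. r' \<in> lowered r}"
proof (induct r arbitrary: z b)
  case Nil thus ?case by (intro exI[of _ 1]) (simp add: vs.span_zero)
next
  case (Cons i r)
  define z' where "z' = br (u i) z"
  have hz': "hom (u_parity i \<noteq> b) z'" unfolding z'_def by (rule br_parity[OF u_homogeneous Cons(2)])
  obtain s where s: "s = 1 \<or> s = -1"
    "br (Y 1) (chain z' r) - sc s (chain (br (Y 1) z') r) \<in> vs.span {chain z' r' | r'. r' \<in> lowered r}"
    using Cons(1)[OF hz'] by blast
  obtain c where c: "br (Y 1) (u i) = sc c (u (i - 1))" using Y1_u_lowers by blast
  have "br (Y 1) z' = sc c (br (u (i - 1)) z) + sc (ss (p 1) (u_parity i)) (br (u i) (br (Y 1) z))"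
    unfolding z'_def using super_jacobi[OF parity_Y1 u_homogeneous Cons(2), of i] by (simp add: c br_scL)
  hence base: "chain (br (Y 1) z') r = sc c (chain z ((i - 1) # r))
      + sc (ss (p 1) (u_parity i)) (chain (br (Y 1) z) (i # r))"
    by (simp add: chain_add chain_scale)
  let ?T = "{chain z r' | r'. r' \<in> lowered (i # r)}"
  have "{chain z' r' | r'. r' \<in> lowered r} \<subseteq> ?T"
    unfolding z'_def by (force intro: lowered_Cons)
  hence 1: "br (Y 1) (chain z' r) - sc s (chain (br (Y 1) z') r) \<in> vs.span ?T"
    using vs.span_mono s(2) by blast
  have 2: "chain z ((i - 1) # r) \<in> vs.span ?T" by (rule vs.span_base) (blast intro: lowered_head)
  have eq: "br (Y 1) (chain z (i # r)) - sc (s * ss (p 1) (u_parity i)) (chain (br (Y 1) z) (i # r))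
     = (br (Y 1) (chain z' r) - sc s (chain (br (Y 1) z') r)) + sc (s * c) (chain z ((i - 1) # r))"
    unfolding base by (simp add: z'_def vs.scale_right_distrib algebra_simps)
  show ?case
    by (intro exI[of _ "s * ss (p 1) (u_parity i)"] conjI sign_mult s(1) super_sign_cases)
      (unfold eq, intro vs.span_add vs.span_scale 1 2)
qed

lemma Y1_u_chain: "\<exists>\<kappa>. (b \<ge> gap \<longrightarrow> \<kappa> \<noteq> 0) \<and>
   br (Y 1) (u_chain (b # r)) - sc \<kappa> (u_chain ((b - 1) # r))
     \<in> vs.span {u_chain (b # r') | r'. r' \<in> lowered r}"
proof -
  obtain s where s: "s = 1 \<or> s = -1"
    "br (Y 1) (chain (u b) r) - sc s (chain (br (Y 1) (u b)) r)
       \<in> vs.span {chain (u b) r' | r'. r' \<in> lowered r}"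
    using Y1_chain[OF u_homogeneous] by blast
  obtain c where c: "br (Y 1) (u b) = sc c (u (b - 1))" using Y1_u_lowers by blast
  have "b \<ge> gap \<longrightarrow> c \<noteq> 0" using Y1_u_nonzero[of b] c by auto
  thus ?thesis using s unfolding u_chain.simps c chain_scale by (intro exI[of _ "s * c"]) auto
qed

text \<open>Applying Y 1 n times to u_chain (a # r) gives a nonzero multiple of u_chain ((a - n) # r)
  plus chains whose head was lowered fewer than n times and whose tail entries were lowered
  at most n times each.\<close>

definition tail_dominated :: "nat \<Rightarrow> nat list \<Rightarrow> nat list \<Rightarrow> bool" where
  "tail_dominated n r r' \<longleftrightarrow> length r' = length r \<and> (\<forall>q<length r. r ! q \<le> r' ! q + n)"

definition lower_terms :: "nat \<Rightarrow> nat \<Rightarrow> nat list \<Rightarrow> 'a set" where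
  "lower_terms n a r = {u_chain (a' # r') | a' r'. a < a' + n \<and> tail_dominated n r r'}"

lemma tail_dominated_Suc: "tail_dominated n r r' \<Longrightarrow> tail_dominated (Suc n) r r'"
  unfolding tail_dominated_def by auto

lemma tail_dominated_lowered:
  "tail_dominated n r r' \<Longrightarrow> r'' \<in> lowered r' \<Longrightarrow> tail_dominated (Suc n) r r''"
  unfolding tail_dominated_def lowered_def by (force simp: nth_list_update)

lemma lowered_lower_terms:
  assumes "a \<le> a' + n" and "tail_dominated n r r'"
  shows "{u_chain (a' # r'') | r''. r'' \<in> lowered r'} \<subseteq> lower_terms (Suc n) a r"
proof
  fix x assume "x \<in> {u_chain (a' # r'') | r''. r'' \<in> lowered r'}"
  then obtain r'' where "x = u_chain (a' # r'')" "r'' \<in> lowered r'" by blast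
  moreover have "a < a' + Suc n" using assms(1) by simp
  ultimately show "x \<in> lower_terms (Suc n) a r"
    unfolding lower_terms_def using tail_dominated_lowered[OF assms(2)] by blast
qed

lemma Y1_lower_term:
  assumes "w \<in> lower_terms n a r" shows "br (Y 1) w \<in> vs.span (lower_terms (Suc n) a r)"
proof -
  obtain a' r' where w: "w = u_chain (a' # r')" "a < a' + n" "tail_dominated n r r'"
    using assms unfolding lower_terms_def by blast
  obtain \<kappa> where k: "br (Y 1) w - sc \<kappa> (u_chain ((a' - 1) # r'))
      \<in> vs.span {u_chain (a' # r'') | r''. r'' \<in> lowered r'}"
    using Y1_u_chain w(1) by blast
  have "a \<le> a' + n" using w(2) by simp
  hence rest: "br (Y 1) w - sc \<kappa> (u_chain ((a' - 1) # r')) \<in> vs.span (lower_terms (Suc n) a r)"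
    using k vs.span_mono[OF lowered_lower_terms[OF _ w(3)]] by blast
  have lead: "u_chain ((a' - 1) # r') \<in> lower_terms (Suc n) a r"
    unfolding lower_terms_def using w(2) tail_dominated_Suc[OF w(3)]
    by (intro CollectI exI[of _ "a' - 1"] exI[of _ r']) simp
  have "br (Y 1) w = (br (Y 1) w - sc \<kappa> (u_chain ((a' - 1) # r'))) + sc \<kappa> (u_chain ((a' - 1) # r'))"
    by simp
  also have "\<dots> \<in> vs.span (lower_terms (Suc n) a r)"
    by (intro vs.span_add rest vs.span_scale vs.span_base lead)
  finally show ?thesis .
qed

abbreviation Y1_pow :: "nat \<Rightarrow> 'a \<Rightarrow> 'a" where "Y1_pow n \<equiv> br (Y 1) ^^ n"

lemma Y1_pow_add: "Y1_pow n (x + y) = Y1_pow n x + Y1_pow n y"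
  by (induct n) (simp_all add: br_addR)

lemma Y1_pow_scale: "Y1_pow n (sc c x) = sc c (Y1_pow n x)"
  by (induct n) (simp_all add: br_scR)

lemma Y1_pow_sum: "Y1_pow n (sum g S) = (\<Sum>i\<in>S. Y1_pow n (g i))"
proof (induct S rule: infinite_finite_induct)
  case (infinite A) thus ?case by (induct n) simp_all
next
  case empty thus ?case by (induct n) simp_all
next
  case (insert a F) thus ?case by (simp add: Y1_pow_add)
qed

lemma Y1_pow_u_chain: "n + gap \<le> a + 1 \<Longrightarrow> \<exists>\<kappa>. \<kappa> \<noteq> 0 \<and>
   Y1_pow n (u_chain (a # r)) - sc \<kappa> (u_chain ((a - n) # r)) \<in> vs.span (lower_terms n a r)"
proof (induct n)
  case 0 thus ?case by (intro exI[of _ 1]) (simp add: vs.span_zero)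
next
  case (Suc n)
  then obtain \<kappa> where k: "\<kappa> \<noteq> 0"
    "Y1_pow n (u_chain (a # r)) - sc \<kappa> (u_chain ((a - n) # r)) \<in> vs.span (lower_terms n a r)"
    by auto
  obtain \<kappa>' where k': "a - n \<ge> gap \<longrightarrow> \<kappa>' \<noteq> 0"
    "br (Y 1) (u_chain ((a - n) # r)) - sc \<kappa>' (u_chain ((a - n - 1) # r))
       \<in> vs.span {u_chain ((a - n) # r') | r'. r' \<in> lowered r}"
    using Y1_u_chain by blast
  have le: "a \<le> (a - n) + n" and dom: "tail_dominated n r r"
    unfolding tail_dominated_def by simp_all
  have "br (Y 1) (u_chain ((a - n) # r)) - sc \<kappa>' (u_chain ((a - n - 1) # r))
      \<in> vs.span (lower_terms (Suc n) a r)"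
    using k'(2) vs.span_mono[OF lowered_lower_terms[OF le dom]] by blast
  hence 2: "br (Y 1) (u_chain ((a - n) # r)) - sc \<kappa>' (u_chain ((a - Suc n) # r))
      \<in> vs.span (lower_terms (Suc n) a r)"
    by (simp add: Suc_eq_plus1)
  have 1: "br (Y 1) (Y1_pow n (u_chain (a # r)) - sc \<kappa> (u_chain ((a - n) # r)))
      \<in> vs.span (lower_terms (Suc n) a r)"
    using br_span_right[OF Y1_lower_term k(2)] .
  have "Y1_pow (Suc n) (u_chain (a # r)) - sc (\<kappa> * \<kappa>') (u_chain ((a - Suc n) # r))
      = br (Y 1) (Y1_pow n (u_chain (a # r)) - sc \<kappa> (u_chain ((a - n) # r)))
        + sc \<kappa> (br (Y 1) (u_chain ((a - n) # r)) - sc \<kappa>' (u_chain ((a - Suc n) # r)))"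
    by (simp add: br_diffR br_scR vs.scale_right_diff_distrib algebra_simps)
  moreover have "\<kappa> * \<kappa>' \<noteq> 0" using k(1) k' Suc(2) by auto
  ultimately show ?case using 1 2 by (intro exI[of _ "\<kappa> * \<kappa>'"]) (simp add: vs.span_add vs.span_scale)
qed

text \<open>Y 2 passes through a chain all of whose entries are \<ge> gap (it kills those u_i).\<close>

lemma Y2_chain: "(\<forall>i\<in>set r. gap \<le> i) \<Longrightarrow> hom b z \<Longrightarrow>
   \<exists>s. (s = 1 \<or> s = -1) \<and> br (Y 2) (chain z r) = sc s (chain (br (Y 2) z) r)"
proof (induct r arbitrary: z b)
  case Nil thus ?case by (intro exI[of _ 1]) simp
next
  case (Cons i r)
  define z' where "z' = br (u i) z"
  have hz': "hom (u_parity i \<noteq> b) z'" unfolding z'_def by (rule br_parity[OF u_homogeneous Cons(3)])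
  obtain s where s: "s = 1 \<or> s = -1" "br (Y 2) (chain z' r) = sc s (chain (br (Y 2) z') r)"
    using Cons(1)[OF _ hz'] Cons(2) by auto
  have "br (Y 2) z' = br (br (Y 2) (u i)) z + sc (ss (p 2) (u_parity i)) (br (u i) (br (Y 2) z))"
    unfolding z'_def by (rule super_jacobi[OF parity_Y2 u_homogeneous Cons(3)])
  hence e: "br (Y 2) z' = sc (ss (p 2) (u_parity i)) (br (u i) (br (Y 2) z))"
    using Y2_kills_u[of i] Cons(2) by simp
  have "br (Y 2) (chain z (i # r)) = sc (s * ss (p 2) (u_parity i)) (chain (br (Y 2) z) (i # r))"
    unfolding chain.simps z'_def[symmetric] s(2) e chain_scale by simp
  thus ?case
    by (intro exI[of _ "s * ss (p 2) (u_parity i)"] conjI sign_mult s(1) super_sign_cases)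
qed

lemma Y2_kills_u_chain: "\<forall>i\<in>set \<rho>. gap \<le> i \<Longrightarrow> br (Y 2) (u_chain \<rho>) = 0"
proof (cases \<rho>)
  case (Cons a r)
  assume all: "\<forall>i\<in>set \<rho>. gap \<le> i"
  hence "\<forall>i\<in>set r. gap \<le> i" using Cons by simp
  then obtain s where "br (Y 2) (chain (u a) r) = sc s (chain (br (Y 2) (u a)) r)"
    using Y2_chain[OF _ u_homogeneous] by blast
  thus ?thesis using Y2_kills_u[of a] all Cons by (simp add: chain_zero)
qed simp

lemma Y2_kills_lower_terms:
  assumes "n + gap \<le> a + 1" and "\<forall>q<length r. gap + n \<le> r ! q" and "x \<in> vs.span (lower_terms n a r)"
  shows "br (Y 2) x = 0"
proof -
  have "br (Y 2) w = 0" if w: "w \<in> lower_terms n a r" for w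
  proof -
    obtain a' r' where w': "w = u_chain (a' # r')" "a < a' + n" "tail_dominated n r r'"
      using w unfolding lower_terms_def by blast
    have "\<forall>i\<in>set (a' # r'). gap \<le> i"
      using assms(1,2) w'(2,3) unfolding tail_dominated_def by (fastforce simp: in_set_conv_nth)
    thus ?thesis using w'(1) Y2_kills_u_chain[of "a' # r'"] by simp
  qed
  hence "br (Y 2) x \<in> vs.span {}"
    using br_span_right[OF _ assms(3), of "Y 2" "{}"] by (simp add: vs.span_zero)
  thus ?thesis by simp
qed

lemma Y2_Y1_pow_above: "n + gap \<le> a \<Longrightarrow> (\<forall>q<length r. gap + n \<le> r ! q) \<Longrightarrow>
    br (Y 2) (Y1_pow n (u_chain (a # r))) = 0"
proof -
  assume a: "n + gap \<le> a" and r: "\<forall>q<length r. gap + n \<le> r ! q"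
  obtain \<kappa> where k: "Y1_pow n (u_chain (a # r)) - sc \<kappa> (u_chain ((a - n) # r)) \<in> vs.span (lower_terms n a r)"
    using Y1_pow_u_chain[of n a r] a by auto
  have 1: "br (Y 2) (Y1_pow n (u_chain (a # r)) - sc \<kappa> (u_chain ((a - n) # r))) = 0"
    by (rule Y2_kills_lower_terms[OF _ r k]) (use a in simp)
  have "\<forall>i\<in>set ((a - n) # r). gap \<le> i" using a r by (fastforce simp: in_set_conv_nth)
  hence 2: "br (Y 2) (u_chain ((a - n) # r)) = 0" by (rule Y2_kills_u_chain)
  show ?thesis using 1 2 by (simp add: br_diffR br_scR)
qed

lemma Y2_Y1_pow_at: "n + gap = a + 1 \<Longrightarrow> (\<forall>q<length r. gap + n \<le> r ! q) \<Longrightarrow>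
   \<exists>\<mu>. \<mu> \<noteq> 0 \<and> br (Y 2) (Y1_pow n (u_chain (a # r))) = sc \<mu> (chain zeta r)"
proof -
  assume a: "n + gap = a + 1" and r: "\<forall>q<length r. gap + n \<le> r ! q"
  obtain \<kappa> where k: "\<kappa> \<noteq> 0"
    "Y1_pow n (u_chain (a # r)) - sc \<kappa> (u_chain ((a - n) # r)) \<in> vs.span (lower_terms n a r)"
    using Y1_pow_u_chain[of n a r] a by auto
  have 1: "br (Y 2) (Y1_pow n (u_chain (a # r)) - sc \<kappa> (u_chain ((a - n) # r))) = 0"
    by (rule Y2_kills_lower_terms[OF _ r k(2)]) (use a in simp)
  have head: "a - n = gap - 1" using a by simp
  have "\<forall>i\<in>set r. gap \<le> i" using r by (fastforce simp: in_set_conv_nth)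
  then obtain s where s: "s = 1 \<or> s = -1"
    "br (Y 2) (chain (u (gap - 1)) r) = sc s (chain (br (Y 2) (u (gap - 1))) r)"
    using Y2_chain[OF _ u_homogeneous] by blast
  obtain \<kappa>2 where k2: "\<kappa>2 \<noteq> 0" "br (Y 2) (u (gap - 1)) = sc \<kappa>2 zeta" using Y2_u_gap by blast
  have "br (Y 2) (u_chain ((a - n) # r)) = sc (s * \<kappa>2) (chain zeta r)"
    unfolding head u_chain.simps s(2) k2(2) chain_scale by simp
  hence "br (Y 2) (Y1_pow n (u_chain (a # r))) = sc (\<kappa> * (s * \<kappa>2)) (chain zeta r)"
    using 1 by (simp add: br_diffR br_scR)
  thus ?thesis using k(1) k2(1) s(1) by (intro exI[of _ "\<kappa> * (s * \<kappa>2)"]) auto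
qed

lemma chain_zeta: "\<exists>\<kappa>. \<kappa> \<noteq> 0 \<and> chain zeta (b # r) = sc \<kappa> (u_chain ((b + gap - 1) # r))"
proof -
  obtain \<kappa> where "\<kappa> \<noteq> 0" "br (u b) zeta = sc \<kappa> (u (b + gap - 1))" using br_u_zeta by blast
  thus ?thesis by (intro exI[of _ \<kappa>]) (simp add: chain_scale)
qed

end


section \<open>Linear independence of the chains on good lists\<close>

context nonnilpotent_contragredient2
begin

fun gapped :: "nat list \<Rightarrow> bool" where
  "gapped (x # y # r) = (x + gap \<le> y \<and> gapped (y # r))"
| "gapped _ = True"

lemma gapped_tl: "gapped (b # r) \<Longrightarrow> gapped r"
  by (cases r) auto

lemma gapped_above: "gapped (b # r) \<Longrightarrow> \<forall>x\<in>set r. b + gap \<le> x"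
proof (induct r arbitrary: b)
  case (Cons y r)
  hence "b + gap \<le> y" "\<forall>x\<in>set r. y + gap \<le> x" by simp_all
  thus ?case by auto
qed simp

definition good :: "nat list \<Rightarrow> bool" where
  "good \<rho> \<longleftrightarrow> (\<exists>a r. \<rho> = a # r \<and> gap \<le> a \<and> gapped r \<and> (\<forall>x\<in>set r. a < x))"

text \<open>Merging the first two entries: [u b, zeta] is a multiple of u (b + gap - 1), which
  turns chain zeta (b # r) into u_chain (merge (a # b # r)).\<close>

fun merge :: "nat list \<Rightarrow> nat list" where
  "merge (a # b # r) = (b + gap - 1) # r"
| "merge \<rho> = \<rho>"

lemma good_merge: "good (a # b # r) \<Longrightarrow> good (merge (a # b # r))"
proof -
  assume "good (a # b # r)"
  hence "gapped (b # r)" "a < b" unfolding good_def by auto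
  moreover have "\<forall>x\<in>set r. b + gap \<le> x" using gapped_above calculation(1) by blast
  ultimately show ?thesis unfolding good_def using gapped_tl gap_ge_2
    by (intro exI[of _ "b + gap - 1"] exI[of _ r]) auto
qed

lemma merge_inj: "inj_on merge {\<rho>. \<exists>b r. \<rho> = a # b # r}"
  by (rule inj_onI) (use gap_ge_2 in auto)

text \<open>The probe ad Y 2 (ad Y 1)^n, with n = j + 1 - gap, detects the good lists with head j.\<close>

definition probe :: "nat \<Rightarrow> 'a \<Rightarrow> 'a" where "probe n x = br (Y 2) (Y1_pow n x)"

lemma probe_combination: "probe n (\<Sum>\<rho>\<in>S. sc (c \<rho>) (g \<rho>)) = (\<Sum>\<rho>\<in>S. sc (c \<rho>) (probe n (g \<rho>)))"
  unfolding probe_def Y1_pow_sum br_sumR Y1_pow_scale br_scR ..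

lemma probe_zero: "probe n 0 = 0"
  using probe_combination[of n _ _ "{}"] by simp

lemma probe_above:
  assumes "good (a # r)" "gap \<le> j" "j < a"
  shows "probe (j + 1 - gap) (u_chain (a # r)) = 0"
  unfolding probe_def
proof (rule Y2_Y1_pow_above)
  show "j + 1 - gap + gap \<le> a" using assms(2,3) by simp
  show "\<forall>q<length r. gap + (j + 1 - gap) \<le> r ! q"
    using assms unfolding good_def by (auto simp: all_set_conv_all_nth)
qed

lemma probe_at:
  assumes "good (a # r)"
  shows "\<exists>\<mu>. \<mu> \<noteq> 0 \<and> probe (a + 1 - gap) (u_chain (a # r)) = sc \<mu> (chain zeta r)"
  unfolding probe_def
proof (rule Y2_Y1_pow_at)
  show "a + 1 - gap + gap = a + 1" using assms unfolding good_def by auto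
  show "\<forall>q<length r. gap + (a + 1 - gap) \<le> r ! q"
    using assms unfolding good_def by (auto simp: all_set_conv_all_nth)
qed

lemma probe_leading_terms:
  assumes fin: "finite S" and good: "\<forall>\<rho>\<in>S. good \<rho>" and above: "\<forall>\<rho>\<in>S. j \<le> hd \<rho>"
    and j: "gap \<le> j"
  shows "\<exists>\<mu>. (\<forall>\<rho>\<in>S. \<mu> \<rho> \<noteq> 0) \<and> probe (j + 1 - gap) (\<Sum>\<rho>\<in>S. sc (c \<rho>) (u_chain \<rho>)) =
           (\<Sum>\<rho>\<in>{\<rho>\<in>S. hd \<rho> = j}. sc (c \<rho> * \<mu> \<rho>) (chain zeta (tl \<rho>)))"
proof -
  let ?n = "j + 1 - gap"
  let ?S1 = "{\<rho>\<in>S. hd \<rho> = j}"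
  define \<mu> where "\<mu> \<rho> = (SOME m. m \<noteq> 0 \<and> probe ?n (u_chain \<rho>) = sc m (chain zeta (tl \<rho>)))"
    for \<rho>
  have \<mu>: "\<mu> \<rho> \<noteq> 0 \<and> probe ?n (u_chain \<rho>) = sc (\<mu> \<rho>) (chain zeta (tl \<rho>))" if "\<rho> \<in> ?S1" for \<rho>
  proof -
    from that have "\<rho> \<in> S" and hd: "hd \<rho> = j" by simp_all
    hence g: "good \<rho>" using good by blast
    then obtain a r where "\<rho> = a # r" unfolding good_def by blast
    hence \<rho>: "\<rho> = j # r" using hd by simp
    have "\<exists>m. m \<noteq> 0 \<and> probe ?n (u_chain (j # r)) = sc m (chain zeta r)"
      using probe_at[of j r] g unfolding \<rho> by blast
    hence "\<exists>m. m \<noteq> 0 \<and> probe ?n (u_chain \<rho>) = sc m (chain zeta (tl \<rho>))"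
      unfolding \<rho> by simp
    from someI_ex[OF this] show ?thesis unfolding \<mu>_def .
  qed
  define \<mu>' where "\<mu>' \<rho> = (if hd \<rho> = j then \<mu> \<rho> else 1)" for \<rho>
  have \<mu>'_nonzero: "\<forall>\<rho>\<in>S. \<mu>' \<rho> \<noteq> 0" using \<mu> unfolding \<mu>'_def by simp
  have killed: "probe ?n (u_chain \<rho>) = 0" if "\<rho> \<in> S - ?S1" for \<rho>
  proof -
    from that have "\<rho> \<in> S" and hd: "hd \<rho> \<noteq> j" by simp_all
    hence g: "good \<rho>" and "j \<le> hd \<rho>" using good above by blast+
    hence lt: "j < hd \<rho>" using hd by simp
    obtain a r where \<rho>: "\<rho> = a # r" using g unfolding good_def by blast
    show ?thesis using probe_above[OF _ j] g lt unfolding \<rho> by simp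
  qed
  have "probe ?n (\<Sum>\<rho>\<in>S. sc (c \<rho>) (u_chain \<rho>)) = (\<Sum>\<rho>\<in>S. sc (c \<rho>) (probe ?n (u_chain \<rho>)))"
    by (rule probe_combination)
  also have "\<dots> = (\<Sum>\<rho>\<in>?S1. sc (c \<rho>) (probe ?n (u_chain \<rho>)))"
    using fin killed by (intro sum.mono_neutral_right) auto
  also have "\<dots> = (\<Sum>\<rho>\<in>?S1. sc (c \<rho> * \<mu>' \<rho>) (chain zeta (tl \<rho>)))"
    using \<mu> by (intro sum.cong) (simp_all add: \<mu>'_def)
  finally show ?thesis using \<mu>'_nonzero by blast
qed

lemma zeta_combination:
  assumes "finite T" "\<forall>\<rho>\<in>T. length \<rho> = 1 \<and> hd \<rho> = j"
    and "(\<Sum>\<rho>\<in>T. sc (c \<rho>) (chain zeta (tl \<rho>))) = 0"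
  shows "\<forall>\<rho>\<in>T. c \<rho> = 0"
proof
  fix \<rho> assume \<rho>: "\<rho> \<in> T"
  have "\<sigma> = [j]" if "\<sigma> \<in> T" for \<sigma>
    using assms(2) that by (cases \<sigma>) (auto simp: One_nat_def)
  hence "T = {[j]}" "\<rho> = [j]" using \<rho> by auto
  thus "c \<rho> = 0" using assms(3) zeta_nonzero by simp
qed

lemma merged_combination:
  assumes fin: "finite T" and T: "\<forall>\<rho>\<in>T. good \<rho> \<and> length \<rho> = Suc (Suc m) \<and> hd \<rho> = j"
    and zero: "(\<Sum>\<rho>\<in>T. sc (c \<rho>) (chain zeta (tl \<rho>))) = 0"
  shows "\<exists>c'. (\<Sum>\<tau>\<in>merge ` T. sc (c' \<tau>) (u_chain \<tau>)) = 0 \<and>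
    (\<forall>\<tau>\<in>merge ` T. good \<tau> \<and> length \<tau> = Suc m) \<and> (\<forall>\<rho>\<in>T. c \<rho> \<noteq> 0 \<longrightarrow> c' (merge \<rho>) \<noteq> 0)"
proof -
  have shape: "\<exists>b r. \<rho> = j # b # r" if "\<rho> \<in> T" for \<rho>
    using T that by (cases \<rho>; cases "tl \<rho>") auto
  have "\<forall>\<rho>\<in>T. \<exists>\<kappa>. \<kappa> \<noteq> 0 \<and> chain zeta (tl \<rho>) = sc \<kappa> (u_chain (merge \<rho>))"
  proof
    fix \<rho> assume "\<rho> \<in> T"
    then obtain b r where "\<rho> = j # b # r" using shape by blast
    thus "\<exists>\<kappa>. \<kappa> \<noteq> 0 \<and> chain zeta (tl \<rho>) = sc \<kappa> (u_chain (merge \<rho>))"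
      using chain_zeta[of b r] by simp
  qed
  then obtain \<kappa> where \<kappa>: "\<forall>\<rho>\<in>T. \<kappa> \<rho> \<noteq> 0 \<and> chain zeta (tl \<rho>) = sc (\<kappa> \<rho>) (u_chain (merge \<rho>))"
    by (rule bchoice[THEN exE])
  have inj: "inj_on merge T" by (rule inj_on_subset[OF merge_inj[of j]]) (use shape in blast)
  define c' where "c' \<tau> = c (inv_into T merge \<tau>) * \<kappa> (inv_into T merge \<tau>)" for \<tau>
  have "(\<Sum>\<tau>\<in>merge ` T. sc (c' \<tau>) (u_chain \<tau>)) = (\<Sum>\<rho>\<in>T. sc (c' (merge \<rho>)) (u_chain (merge \<rho>)))"
    by (rule sum.reindex[OF inj, unfolded comp_def])
  also have "\<dots> = (\<Sum>\<rho>\<in>T. sc (c \<rho>) (chain zeta (tl \<rho>)))"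
    by (rule sum.cong[OF refl]) (simp add: c'_def inv_into_f_f[OF inj] \<kappa>)
  finally have "(\<Sum>\<tau>\<in>merge ` T. sc (c' \<tau>) (u_chain \<tau>)) = 0" using zero by simp
  moreover have "good \<tau> \<and> length \<tau> = Suc m" if \<tau>: "\<tau> \<in> merge ` T" for \<tau>
  proof -
    obtain \<rho> where "\<rho> \<in> T" "\<tau> = merge \<rho>" using \<tau> by blast
    moreover obtain b r where "\<rho> = j # b # r" using shape calculation(1) by blast
    ultimately show ?thesis using T good_merge[of j b r] by auto
  qed
  moreover have "c' (merge \<rho>) \<noteq> 0" if "\<rho> \<in> T" "c \<rho> \<noteq> 0" for \<rho>
    using that \<kappa> by (simp add: c'_def inv_into_f_f[OF inj])
  ultimately show ?thesis by blast
qed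

text \<open>Independence, by induction on the length: probing at the smallest head j among the
  lists with nonzero coefficient leaves a nontrivial relation of smaller length.\<close>

theorem good_chains_independent:
  "finite S \<Longrightarrow> \<forall>\<rho>\<in>S. good \<rho> \<and> length \<rho> = m \<Longrightarrow> (\<Sum>\<rho>\<in>S. sc (c \<rho>) (u_chain \<rho>)) = 0 \<Longrightarrow>
   \<forall>\<rho>\<in>S. c \<rho> = 0"
proof (induct m arbitrary: S c)
  case 0 thus ?case by (auto simp: good_def)
next
  case (Suc m)
  show ?case
  proof (rule ccontr)
    define S0 where "S0 = {\<rho>\<in>S. c \<rho> \<noteq> 0}"
    assume "\<not> (\<forall>\<rho>\<in>S. c \<rho> = 0)"
    hence S0: "S0 \<noteq> {}" "finite S0" "S0 \<subseteq> S" using Suc(2) unfolding S0_def by auto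
    define j where "j = Min (hd ` S0)"
    define T where "T = {\<rho>\<in>S0. hd \<rho> = j}"
    have good: "\<forall>\<rho>\<in>S0. good \<rho> \<and> length \<rho> = Suc m" using S0(3) Suc(3) by auto
    have above: "\<forall>\<rho>\<in>S0. j \<le> hd \<rho>" unfolding j_def using S0(2) by simp
    have "j \<in> hd ` S0" unfolding j_def using S0 by (intro Min_in) auto
    hence T_ne: "T \<noteq> {}" and "gap \<le> j" using good unfolding T_def good_def by auto
    have "(\<Sum>\<rho>\<in>S0. sc (c \<rho>) (u_chain \<rho>)) = (\<Sum>\<rho>\<in>S. sc (c \<rho>) (u_chain \<rho>))"
      by (rule sum.mono_neutral_left[OF Suc(2) S0(3)]) (auto simp: S0_def)
    moreover obtain \<mu> where \<mu>: "\<forall>\<rho>\<in>S0. \<mu> \<rho> \<noteq> 0"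
      "probe (j + 1 - gap) (\<Sum>\<rho>\<in>S0. sc (c \<rho>) (u_chain \<rho>)) =
         (\<Sum>\<rho>\<in>T. sc (c \<rho> * \<mu> \<rho>) (chain zeta (tl \<rho>)))"
      using probe_leading_terms[OF S0(2) _ above \<open>gap \<le> j\<close>] good unfolding T_def by blast
    ultimately have rel: "(\<Sum>\<rho>\<in>T. sc (c \<rho> * \<mu> \<rho>) (chain zeta (tl \<rho>))) = 0"
      using Suc(4) probe_zero by simp
    have T: "finite T" "T \<subseteq> S0" "\<forall>\<rho>\<in>T. good \<rho> \<and> length \<rho> = Suc m \<and> hd \<rho> = j"
      using S0(2) good unfolding T_def by auto
    have nonzero: "c \<rho> * \<mu> \<rho> \<noteq> 0" if "\<rho> \<in> T" for \<rho>
      using that T(2) \<mu>(1) unfolding S0_def by auto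
    show False
    proof (cases m)
      case 0
      hence "\<forall>\<rho>\<in>T. length \<rho> = 1 \<and> hd \<rho> = j" using T(3) by (simp add: One_nat_def)
      hence "\<forall>\<rho>\<in>T. c \<rho> * \<mu> \<rho> = 0" by (rule zeta_combination[OF T(1) _ rel])
      thus False using T_ne nonzero by blast
    next
      case (Suc m')
      then obtain c' where c': "(\<Sum>\<tau>\<in>merge ` T. sc (c' \<tau>) (u_chain \<tau>)) = 0"
        "\<forall>\<tau>\<in>merge ` T. good \<tau> \<and> length \<tau> = m"
        "\<forall>\<rho>\<in>T. c \<rho> * \<mu> \<rho> \<noteq> 0 \<longrightarrow> c' (merge \<rho>) \<noteq> 0"
        using merged_combination[OF T(1) _ rel] T(3) by blast
      have "\<forall>\<tau>\<in>merge ` T. c' \<tau> = 0" by (rule Suc.hyps[OF _ c'(2,1)]) (use T(1) in simp)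
      thus False using T_ne nonzero c'(3) by blast
    qed
  qed
qed

end


section \<open>Degrees and the counting of good lists\<close>

context nonnilpotent_contragredient2
begin

abbreviation deg :: "int \<Rightarrow> 'a \<Rightarrow> bool" where "deg \<equiv> deg_elem br H X Y"

lemma deg_u: "deg (int k + 1) (u k)"
proof (induct k)
  case 0 show ?case unfolding u_0 using deg_X[of 2 br H X Y] by simp
next
  case (Suc k)
  have "deg (1 + (int k + 1)) (br (X 1) (u k))" by (rule deg_br[OF deg_X Suc]) simp
  thus ?case by (simp add: u_Suc add.commute)
qed

lemma deg_chain: "deg d z \<Longrightarrow> deg (d + int (sum_list r + length r)) (chain z r)"
proof (induct r arbitrary: d z)
  case (Cons i r)
  have "deg ((int i + 1) + d) (br (u i) z)" by (rule deg_br[OF deg_u Cons(2)])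
  from Cons(1)[OF this] show ?case by (simp add: algebra_simps)
qed simp

lemma deg_u_chain: "deg (int (sum_list (a # r) + length (a # r))) (u_chain (a # r))"
  using deg_chain[OF deg_u, of a r] by (simp add: algebra_simps)

end

primrec spread :: "nat \<Rightarrow> nat \<Rightarrow> nat list \<Rightarrow> nat list" where
  "spread B c [] = []"
| "spread B c (x # xs) = (c + x) # spread B (c + B) xs"

lemma spread_length: "length (spread B c xs) = length xs"
  by (induct xs arbitrary: c) simp_all

lemma spread_lower: "\<forall>z\<in>set (spread B c xs). c \<le> z"
  by (induct xs arbitrary: c) (auto, fastforce)

lemma spread_upper: "\<forall>x\<in>set xs. x < N \<Longrightarrow> \<forall>z\<in>set (spread B c xs). z \<le> c + length xs * B + N"
proof (induct xs arbitrary: c)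
  case (Cons x xs)
  have "\<forall>z\<in>set (spread B (c + B) xs). z \<le> (c + B) + length xs * B + N" using Cons by simp
  thus ?case using Cons(2) by auto
qed simp

lemma spread_inj: "spread B c xs = spread B c ys \<Longrightarrow> xs = ys"
proof (induct xs arbitrary: c ys)
  case Nil thus ?case by (cases ys) simp_all
next
  case (Cons x xs) thus ?case by (cases ys) auto
qed

lemma spread_sum: "sum_list (spread B c xs) = sum_list (spread B c (replicate (length xs) 0)) + sum_list xs"
  by (induct xs arbitrary: c) simp_all

lemma sum_list_le: "\<forall>x\<in>set xs. x \<le> K \<Longrightarrow> sum_list xs \<le> length xs * K"
  by (induct xs) auto

definition growth_constant :: "nat \<Rightarrow> nat \<Rightarrow> nat" where
  "growth_constant t k = k * (k + 2) * (k + t + 2) + k + (k + t + 2)"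

lemma family_degree_bound:
  fixes N k t :: nat
  assumes N: "1 \<le> N"
  defines "B \<equiv> N + t" and "b \<equiv> k * N + t + 1"
  shows "sum_list (spread B b (replicate k 0)) + k * N + t + Suc k + 1 \<le> growth_constant t k * N"
proof -
  define Q where "Q = k + t + 2"
  have "Q \<le> Q * N" using mult_le_mono2[OF N, of Q] by simp
  hence QN: "c \<le> Q * N" if "c \<le> Q" for c using that by (rule le_trans[rotated])
  have tN: "t + 1 \<le> (t + 1) * N" using mult_le_mono2[OF N, of "t + 1"] by simp
  have "b \<le> (k + t + 1) * N" using tN unfolding b_def by (simp add: algebra_simps)
  also have "\<dots> \<le> Q * N" unfolding Q_def by (rule mult_le_mono1) simp
  finally have bQ: "b \<le> Q * N" .
  have "B \<le> (t + 1) * N" using mult_le_mono2[OF N, of t] unfolding B_def by (simp add: algebra_simps)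
  also have "\<dots> \<le> Q * N" unfolding Q_def by (rule mult_le_mono1) simp
  finally have BQ: "B \<le> Q * N" .
  have "\<forall>z\<in>set (spread B b (replicate k 0)). z \<le> b + k * B + 1"
    using spread_upper[of "replicate k 0" 1 B b] by simp
  hence "sum_list (spread B b (replicate k 0)) \<le> k * (b + k * B + 1)"
    using sum_list_le[of "spread B b (replicate k 0)"] by (simp add: spread_length)
  also have "\<dots> \<le> k * (Q * N + k * (Q * N) + Q * N)"
    using bQ BQ QN[of 1] by (intro mult_le_mono2 add_mono) (simp_all add: Q_def)
  also have "\<dots> = k * (k + 2) * Q * N" by (simp add: algebra_simps)
  finally have "sum_list (spread B b (replicate k 0)) + k * N + t + Suc k + 1
      \<le> k * (k + 2) * Q * N + k * N + Q * N"
    using QN[of "t + k + 2"] by (simp add: Q_def)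
  also have "\<dots> = growth_constant t k * N" unfolding growth_constant_def Q_def by (simp add: algebra_simps)
  finally show ?thesis .
qed

context nonnilpotent_contragredient2
begin

lemma spread_gapped: "N + gap \<le> B \<Longrightarrow> \<forall>x\<in>set xs. x < N \<Longrightarrow> gapped (spread B c xs)"
proof (induct xs arbitrary: c)
  case (Cons x xs)
  show ?case
  proof (cases xs)
    case (Cons y ys)
    have "gapped (spread B (c + B) xs)" using Cons.hyps[of "c + B"] Cons.prems by simp
    moreover have "c + x + gap \<le> c + B + y" using Cons.prems Cons by simp
    ultimately show ?thesis using Cons by simp
  qed simp
qed simp

text \<open>For every N \<ge> 1 there are N^k good lists of length k + 1 with the same degree
  M < growth_constant gap k * N: the tail is spread B b xs for xs \<in> {0..<N}^k, and the head
  makes the degree sum constant.\<close>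

lemma good_family:
  assumes N: "1 \<le> N"
  shows "\<exists>S M. finite S \<and> card S = N ^ k \<and>
    (\<forall>\<rho>\<in>S. good \<rho> \<and> length \<rho> = Suc k \<and> sum_list \<rho> + length \<rho> = M) \<and>
    M + 1 \<le> growth_constant gap k * N"
proof -
  define B where "B = N + gap"
  define b where "b = k * N + gap + 1"
  define Z where "Z = sum_list (spread B b (replicate k 0))"
  define T where "T = Z + k * N + gap"
  define \<rho> where "\<rho> xs = (T - sum_list (spread B b xs)) # spread B b xs" for xs
  define Xs where "Xs = {xs. set xs \<subseteq> {..<N} \<and> length xs = k}"
  have good: "good (\<rho> xs) \<and> length (\<rho> xs) = Suc k \<and> sum_list (\<rho> xs) + length (\<rho> xs) = T + Suc k"
    if xs: "xs \<in> Xs" for xs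
  proof -
    have lt: "\<forall>x\<in>set xs. x < N" and len: "length xs = k" using xs unfolding Xs_def by auto
    have "sum_list xs \<le> k * (N - 1)" using sum_list_le[of xs "N - 1"] lt len by fastforce
    moreover have "k * (N - 1) + k \<le> k * N" using N by (simp add: algebra_simps diff_mult_distrib2)
    moreover have "sum_list (spread B b xs) = Z + sum_list xs"
      unfolding Z_def using spread_sum[of B b xs] len by simp
    ultimately have "gap \<le> T - sum_list (spread B b xs)" "T - sum_list (spread B b xs) < b"
      "sum_list (spread B b xs) \<le> T"
      unfolding T_def b_def by linarith+
    moreover have "gapped (spread B b xs)" by (rule spread_gapped[OF _ lt]) (simp add: B_def)
    ultimately have "good (\<rho> xs)"
      unfolding good_def \<rho>_def using spread_lower[of B b xs] by fastforce
    thus ?thesis using xs unfolding \<rho>_def Xs_def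
      by (simp add: spread_length \<open>sum_list (spread B b xs) \<le> T\<close>)
  qed
  have inj: "inj_on \<rho> Xs" unfolding \<rho>_def by (rule inj_onI) (auto dest: spread_inj)
  have fin: "finite Xs" and card: "card Xs = N ^ k"
    unfolding Xs_def using finite_lists_length_eq[of "{..<N}" k] card_lists_length_eq[of "{..<N}" k]
    by simp_all
  have bound: "T + Suc k + 1 \<le> growth_constant gap k * N"
    using family_degree_bound[OF N, where k = k and t = gap] unfolding T_def Z_def B_def b_def by simp
  show ?thesis
  proof (intro exI conjI)
    show "finite (\<rho> ` Xs)" using fin by simp
    show "card (\<rho> ` Xs) = N ^ k" using card_image[OF inj] card by simp
    show "\<forall>\<sigma>\<in>\<rho> ` Xs. good \<sigma> \<and> length \<sigma> = Suc k \<and> sum_list \<sigma> + length \<sigma> = T + Suc k"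
      using good by blast
  qed (rule bound)
qed

end


section \<open>Growth\<close>

context nonnilpotent_contragredient2
begin

lemma good_chains_independent_set:
  assumes fin: "finite S" and S: "\<forall>\<rho>\<in>S. good \<rho> \<and> length \<rho> = m"
  shows "inj_on u_chain S" and "vs.independent (u_chain ` S)"
proof -
  have zero: "\<forall>\<rho>\<in>S'. c \<rho> = 0" if "S' \<subseteq> S" "(\<Sum>\<rho>\<in>S'. sc (c \<rho>) (u_chain \<rho>)) = 0" for S' c
    using good_chains_independent[OF finite_subset[OF that(1) fin] _ that(2)] S that(1) by blast
  show inj: "inj_on u_chain S"
  proof (rule inj_onI, rule ccontr)
    fix x y assume xy: "x \<in> S" "y \<in> S" "u_chain x = u_chain y" "x \<noteq> y"
    have "(\<Sum>\<rho>\<in>{x, y}. sc (if \<rho> = x then 1 else -1) (u_chain \<rho>)) = 0" using xy by simp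
    from zero[OF _ this] xy show False by auto
  qed
  show "vs.independent (u_chain ` S)"
    unfolding vs.dependent_explicit
  proof
    assume "\<exists>t u. finite t \<and> t \<subseteq> u_chain ` S \<and> (\<Sum>v\<in>t. sc (u v) v) = 0 \<and> (\<exists>v\<in>t. u v \<noteq> 0)"
    then obtain t u v where t: "finite t" "t \<subseteq> u_chain ` S" "(\<Sum>v\<in>t. sc (u v) v) = 0"
      "v \<in> t" "u v \<noteq> 0"
      by blast
    define St where "St = {\<rho>\<in>S. u_chain \<rho> \<in> t}"
    have t_image: "t = u_chain ` St" using t(2) unfolding St_def by auto
    have injSt: "inj_on u_chain St" using inj unfolding St_def by (rule inj_on_subset) auto
    have "(\<Sum>\<rho>\<in>St. sc (u (u_chain \<rho>)) (u_chain \<rho>)) = 0"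
      using t(3) unfolding t_image sum.reindex[OF injSt] by (simp add: comp_def)
    from zero[OF _ this] have "\<forall>\<rho>\<in>St. u (u_chain \<rho>) = 0" unfolding St_def by auto
    thus False using t(4,5) unfolding t_image by auto
  qed
qed

lemma graded_dim_lower_bound:
  assumes N: "1 \<le> N"
    and fin: "\<And>m. \<exists>B. finite B \<and> graded_piece sc br H X Y m \<subseteq> vs.span B"
  shows "\<exists>M. N ^ k \<le> vs.dim (graded_piece sc br H X Y (int M)) \<and> M + 1 \<le> growth_constant gap k * N"
proof -
  obtain S M where S: "finite S" "card S = N ^ k"
    "\<forall>\<rho>\<in>S. good \<rho> \<and> length \<rho> = Suc k \<and> sum_list \<rho> + length \<rho> = M"
    "M + 1 \<le> growth_constant gap k * N"
    using good_family[OF N] by blast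
  have "u_chain ` S \<subseteq> graded_piece sc br H X Y (int M)"
  proof
    fix x assume "x \<in> u_chain ` S"
    then obtain a r where "a # r \<in> S" "x = u_chain (a # r)" using S(3) unfolding good_def by auto
    hence "deg (int M) x" using deg_u_chain[of a r] S(3) by auto
    thus "x \<in> graded_piece sc br H X Y (int M)" unfolding graded_piece_def by (intro vs.span_base) simp
  qed
  moreover obtain F where "finite F" "graded_piece sc br H X Y (int M) \<subseteq> vs.span F" using fin by blast
  moreover have "vs.independent (u_chain ` S)" "inj_on u_chain S"
    using good_chains_independent_set[OF S(1)] S(3) by blast+
  ultimately have "card (u_chain ` S) \<le> vs.dim (graded_piece sc br H X Y (int M))"
    using vs.independent_card_le_dim_spanned by blast
  thus ?thesis using card_image[OF \<open>inj_on u_chain S\<close>] S(2,4) by (intro exI[of _ M]) simp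
qed

theorem growth_infinite: "infinite_growth sc br H X Y"
  unfolding infinite_growth_def
proof
  assume "\<exists>C::real. \<exists>d::nat. \<forall>m::int.
      (\<exists>B. finite B \<and> graded_piece sc br H X Y m \<subseteq> module.span sc B) \<and>
      real (vector_space.dim sc (graded_piece sc br H X Y m)) \<le> C * (1 + real_of_int \<bar>m\<bar>) ^ d"
  then obtain C :: real and d :: nat where
    fin: "\<And>m. \<exists>B. finite B \<and> graded_piece sc br H X Y m \<subseteq> vs.span B" and
    poly: "\<And>m. real (vs.dim (graded_piece sc br H X Y m)) \<le> C * (1 + real_of_int \<bar>m\<bar>) ^ d"
    by blast
  show False
  proof (rule no_polynomial_bound)
    fix N :: nat assume "1 \<le> N"
    thus "\<exists>M. N ^ Suc d \<le> vs.dim (graded_piece sc br H X Y (int M)) \<and>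
        M + 1 \<le> growth_constant gap (Suc d) * N"
      by (rule graded_dim_lower_bound[OF _ fin])
  next
    fix M :: nat
    show "real (vs.dim (graded_piece sc br H X Y (int M))) \<le> C * (1 + real M) ^ d"
      using poly[of "int M"] by simp
  qed
qed

end

theorem lemma3p3:
  fixes sc :: "complex \<Rightarrow> 'a::ab_group_add \<Rightarrow> 'a"
    and br :: "'a \<Rightarrow> 'a \<Rightarrow> 'a"
    and E Od H :: "'a set"
    and A :: "nat \<Rightarrow> nat \<Rightarrow> complex"
    and p :: "nat \<Rightarrow> bool"
    and \<alpha> :: "nat \<Rightarrow> 'a \<Rightarrow> complex"
    and hh X Y :: "nat \<Rightarrow> 'a"
  assumes "is_contragredient2 sc br E Od A p H \<alpha> hh X Y"
    and "A 1 2 * A 2 1 \<noteq> 0"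
    and "\<forall>m::nat. ((\<lambda>v. br (X 1) v) ^^ m) (X 2) \<noteq> 0"
  shows "infinite_growth sc br H X Y"
proof -
  have "A 2 1 \<noteq> 0" using assms(2) by auto
  then interpret nonnilpotent_contragredient2 sc br E Od H A p \<alpha> hh X Y
    using assms(1,3) by unfold_locales
  show ?thesis by (rule growth_infinite)
qed

end
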